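(* There exist continuous functions $g_1,g_2,g_3,g_4:\mathrm{SO}(4)\to S^3\times S^3$ such that for every rotation $R\in\mathrm{SO}(4)$, $\mathbf{R}_{QQ}(g_i(R))=R$ for some $i\in\{1,2,3,4\}$.
   Context: Identify $\mathbb{R}^4$ with the quaternions via $(w,x,y,z)\leftrightarrow w+x\mathbf{i}+y\mathbf{j}+z\mathbf{k}$; $S^3$ is the set of unit quaternions. For $(\mathbf{q}_L,\mathbf{q}_R)\in S^3\times S^3$, $\mathbf{R}_{QQ}(\mathbf{q}_L,\mathbf{q}_R)\in\mathrm{SO}(4)$ is the rotation $\mathbf{p}\mapsto\mathbf{q}_L\mathbf{p}\mathbf{q}_R$ of $\mathbb{R}^4$. *)

theory Defs
  imports "HOL-Analysis.Analysis"
begin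

text \<open>R^4 identified with the quaternions: (w,x,y,z) = vector components 1,2,3,4
  corresponds to w + x i + y j + z k.  Hamilton product:\<close>
definition qmult :: "real^4 \<Rightarrow> real^4 \<Rightarrow> real^4" where
  "qmult p q = vector
     [ p$1 * q$1 - p$2 * q$2 - p$3 * q$3 - p$4 * q$4,
       p$1 * q$2 + p$2 * q$1 + p$3 * q$4 - p$4 * q$3,
       p$1 * q$3 - p$2 * q$4 + p$3 * q$1 + p$4 * q$2,
       p$1 * q$4 + p$2 * q$3 - p$3 * q$2 + p$4 * q$1 ]"

definition S3 :: "(real^4) set" where
  "S3 = sphere 0 1"

definition SO4 :: "(real^4^4) set" where
  "SO4 = {A. orthogonal_matrix A \<and> det A = 1}"

definition R_QQ :: "(real^4) \<times> (real^4) \<Rightarrow> real^4^4" where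
  "R_QQ q = matrix (\<lambda>p. qmult (qmult (fst q) p) (snd q))"

end

theory Submission
  imports Defs
begin

text \<open>
  Let \<open>a = R 1\<close>, a unit quaternion, and \<open>L\<^sub>a\<close> left multiplication by \<open>a\<close>. Then
  \<open>P = L\<^sub>a\<^sup>-\<^sup>1 R\<close> is a rotation fixing \<open>1\<close>, so \<open>P p = q p q\<^sup>*\<close> for a unit quaternion \<open>q\<close>
  (unique up to sign), and \<open>R p = (a q) p q\<^sup>*\<close>. Shepperd's method recovers \<open>\<plusminus>q\<close> from \<open>P\<close>:
  the matrix \<open>K(P) = 4 q q\<^sup>T\<close> is affine in the entries of \<open>P\<close> and has trace \<open>4\<close>, so some
  diagonal entry \<open>K\<^sub>k\<^sub>k = 4 q\<^sub>k\<^sup>2\<close> is at least \<open>1\<close>, and there the normalised \<open>k\<close>-th column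
  of \<open>K(P)\<close> is \<open>\<plusminus>q\<close>. Raising the \<open>k\<close>-th coordinate of that column to at least \<open>1\<close> before
  normalising keeps it away from \<open>0\<close>, which makes \<open>g\<^sub>k\<close> continuous on all of SO(4) without
  changing it where \<open>K\<^sub>k\<^sub>k \<ge> 1\<close>.
\<close>

lemma vector_4 [simp]:
  "(vector [x1, x2, x3, x4] :: 'a::zero^4) $ 1 = x1"
  "(vector [x1, x2, x3, x4] :: 'a::zero^4) $ 2 = x2"
  "(vector [x1, x2, x3, x4] :: 'a::zero^4) $ 3 = x3"
  "(vector [x1, x2, x3, x4] :: 'a::zero^4) $ 4 = x4"
  unfolding vector_def by simp_all

lemma axis_4 [simp]:
  "axis (1::4) (1::real) = vector [1, 0, 0, 0]" "axis (2::4) (1::real) = vector [0, 1, 0, 0]"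
  "axis (3::4) (1::real) = vector [0, 0, 1, 0]" "axis (4::4) (1::real) = vector [0, 0, 0, 1]"
  by (simp_all add: vec_eq_iff forall_4 axis_def)

lemma continuous_on_vector_4 [continuous_intros]:
  fixes f1 f2 f3 f4 :: "'a::topological_space \<Rightarrow> 'b::{zero,topological_space}"
  assumes "continuous_on S f1" "continuous_on S f2" "continuous_on S f3" "continuous_on S f4"
  shows "continuous_on S (\<lambda>x. vector [f1 x, f2 x, f3 x, f4 x] :: 'b^4)"
proof -
  have "continuous_on S (\<lambda>x. \<chi> i. vector [f1 x, f2 x, f3 x, f4 x] $ i :: 'b^4)"
  proof (rule continuous_on_vec_lambda)
    show "continuous_on S (\<lambda>x. vector [f1 x, f2 x, f3 x, f4 x] $ i)" for i :: 4
      using exhaust_4[of i] assms by auto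
  qed
  then show ?thesis
    by simp
qed

lemma continuous_on_column [continuous_intros]:
  "continuous_on S f \<Longrightarrow> continuous_on S (\<lambda>x. column j (f x))"
  unfolding column_def by (intro continuous_intros)

lemma det_4:
  "det (A::'a::comm_ring_1^4^4) =
  A$1$1*A$2$2*A$3$3*A$4$4 - A$1$1*A$2$2*A$3$4*A$4$3 - A$1$1*A$2$3*A$3$2*A$4$4
+ A$1$1*A$2$3*A$3$4*A$4$2 + A$1$1*A$2$4*A$3$2*A$4$3 - A$1$1*A$2$4*A$3$3*A$4$2
- A$1$2*A$2$1*A$3$3*A$4$4 + A$1$2*A$2$1*A$3$4*A$4$3 + A$1$2*A$2$3*A$3$1*A$4$4
- A$1$2*A$2$3*A$3$4*A$4$1 - A$1$2*A$2$4*A$3$1*A$4$3 + A$1$2*A$2$4*A$3$3*A$4$1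
+ A$1$3*A$2$1*A$3$2*A$4$4 - A$1$3*A$2$1*A$3$4*A$4$2 - A$1$3*A$2$2*A$3$1*A$4$4
+ A$1$3*A$2$2*A$3$4*A$4$1 + A$1$3*A$2$4*A$3$1*A$4$2 - A$1$3*A$2$4*A$3$2*A$4$1
- A$1$4*A$2$1*A$3$2*A$4$3 + A$1$4*A$2$1*A$3$3*A$4$2 + A$1$4*A$2$2*A$3$1*A$4$3
- A$1$4*A$2$2*A$3$3*A$4$1 - A$1$4*A$2$3*A$3$1*A$4$2 + A$1$4*A$2$3*A$3$2*A$4$1"
proof -
  have f1: "finite {2::4, 3, 4}" "1 \<notin> {2::4, 3, 4}"
    and f2: "finite {3::4, 4}" "2 \<notin> {3::4, 4}"
    and f3: "finite {4::4}" "3 \<notin> {4::4}"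
    by auto
  show ?thesis
    unfolding det_def UNIV_4 sum_over_permutations_insert[OF f1]
      sum_over_permutations_insert[OF f2] sum_over_permutations_insert[OF f3] permutes_sing
    by (simp add: sign_swap_id permutation_swap_id permutation_compose sign_compose sign_id
        swap_id_eq algebra_simps)
qed

lemma qmult_nth [simp]:
  "qmult p q $ 1 = p$1 * q$1 - p$2 * q$2 - p$3 * q$3 - p$4 * q$4"
  "qmult p q $ 2 = p$1 * q$2 + p$2 * q$1 + p$3 * q$4 - p$4 * q$3"
  "qmult p q $ 3 = p$1 * q$3 - p$2 * q$4 + p$3 * q$1 + p$4 * q$2"
  "qmult p q $ 4 = p$1 * q$4 + p$2 * q$3 - p$3 * q$2 + p$4 * q$1"
  by (simp_all add: qmult_def)

definition qconj :: "real^4 \<Rightarrow> real^4" where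
  "qconj p = vector [p$1, - p$2, - p$3, - p$4]"

lemma qconj_nth [simp]:
  "qconj p $ 1 = p$1" "qconj p $ 2 = - p$2" "qconj p $ 3 = - p$3" "qconj p $ 4 = - p$4"
  by (simp_all add: qconj_def)

lemma qmult_assoc: "qmult (qmult p q) r = qmult p (qmult q r)"
  by (simp add: vec_eq_iff forall_4 algebra_simps)

lemma qmult_scaleR_left: "qmult (c *\<^sub>R p) q = c *\<^sub>R qmult p q"
  and qmult_scaleR_right: "qmult p (c *\<^sub>R q) = c *\<^sub>R qmult p q"
  and qconj_scaleR: "qconj (c *\<^sub>R p) = c *\<^sub>R qconj p"
  by (simp_all add: vec_eq_iff forall_4 algebra_simps)

lemma linear_qmult_left: "linear (qmult b)"
  by (rule linearI) (simp_all add: vec_eq_iff forall_4 algebra_simps)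

lemma linear_qmult_both: "linear (\<lambda>p. qmult (qmult a p) b)"
  by (rule linearI) (simp_all add: vec_eq_iff forall_4 algebra_simps)

lemma norm_qmult: "norm (qmult p q) = norm p * norm q"
proof -
  have "qmult p q \<bullet> qmult p q = (p \<bullet> p) * (q \<bullet> q)"
    by (simp add: inner_vec_def sum_4 algebra_simps)
  then show ?thesis
    by (simp add: norm_eq_sqrt_inner real_sqrt_mult)
qed

lemma norm_qconj: "norm (qconj p) = norm p"
  by (simp add: norm_eq_sqrt_inner inner_vec_def sum_4)

lemma qmult_qconj_right_unit:
  assumes "norm b = 1"
  shows "qmult b (qmult (qconj b) p) = p"
proof -
  have "b$1 * b$1 + b$2 * b$2 + b$3 * b$3 + b$4 * b$4 = 1"
    using assms by (simp add: norm_eq_1 inner_vec_def sum_4)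
  then show ?thesis
    by (simp add: vec_eq_iff forall_4) algebra
qed

lemma continuous_on_qmult [continuous_intros]:
  "continuous_on S f \<Longrightarrow> continuous_on S g \<Longrightarrow> continuous_on S (\<lambda>x. qmult (f x) (g x))"
  unfolding qmult_def by (intro continuous_intros)

lemma continuous_on_qconj [continuous_intros]:
  "continuous_on S f \<Longrightarrow> continuous_on S (\<lambda>x. qconj (f x))"
  unfolding qconj_def by (intro continuous_intros)

definition qleft :: "real^4 \<Rightarrow> real^4^4" where
  "qleft b = matrix (qmult b)"

lemma qleft_mult_vec: "qleft b *v p = qmult b p"
  unfolding qleft_def using linear_qmult_left by (metis matrix_vector_mul(2))

lemma column_qleft_mult: "column j (qleft b ** A) = qmult b (column j A)"
  by (simp flip: matrix_vector_mult_basis add: matrix_vector_mul_assoc[symmetric] qleft_mult_vec)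

lemma qleft_qconj_right_inverse: "norm b = 1 \<Longrightarrow> qleft b ** qleft (qconj b) = mat 1"
  by (simp add: matrix_eq matrix_vector_mul_assoc[symmetric] qleft_mult_vec qmult_qconj_right_unit)

lemma det_qleft: "det (qleft b) = (b \<bullet> b)\<^sup>2"
  by (simp add: det_4 qleft_def matrix_def inner_vec_def sum_4 power2_eq_square) algebra

lemma qleft_SO4:
  assumes "norm b = 1"
  shows "qleft b \<in> SO4"
proof -
  have "orthogonal_transformation (qmult b)"
    by (simp add: orthogonal_transformation linear_qmult_left norm_qmult assms)
  then have "orthogonal_matrix (qleft b)"
    by (simp add: orthogonal_transformation_matrix qleft_def)
  moreover have "det (qleft b) = 1"
    using assms by (simp add: det_qleft norm_eq_1)
  ultimately show ?thesis
    by (simp add: SO4_def)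
qed

lemma R_QQ_qmult_left: "R_QQ (qmult a p, q) = qleft a ** R_QQ (p, q)"
proof -
  have "(\<lambda>x. qmult (qmult (qmult a p) x) q) = qmult a \<circ> (\<lambda>x. qmult (qmult p x) q)"
    by (simp add: fun_eq_iff qmult_assoc)
  then show ?thesis
    by (simp add: R_QQ_def qleft_def matrix_compose linear_qmult_left linear_qmult_both)
qed

lemma R_QQ_scaleR: "R_QQ (c *\<^sub>R p, d *\<^sub>R q) = (c * d) *\<^sub>R R_QQ (p, q)"
  by (simp add: R_QQ_def matrix_def vec_eq_iff qmult_scaleR_left qmult_scaleR_right)

lemma norm_column_SO4: "R \<in> SO4 \<Longrightarrow> norm (column j R) = 1"
  by (simp add: SO4_def orthogonal_matrix_orthonormal_columns)

definition one_fixing_factor :: "real^4^4 \<Rightarrow> real^4^4" where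
  "one_fixing_factor R = qleft (qconj (column 1 R)) ** R"

lemma one_fixing_factor_SO4:
  assumes "R \<in> SO4"
  shows "one_fixing_factor R \<in> SO4"
proof -
  have "qleft (qconj (column 1 R)) \<in> SO4"
    by (rule qleft_SO4) (simp add: norm_qconj norm_column_SO4 assms)
  with assms show ?thesis
    by (simp add: one_fixing_factor_def SO4_def orthogonal_matrix_mul det_mul)
qed

lemma one_fixing_factor_fixes_one:
  assumes "R \<in> SO4"
  shows "one_fixing_factor R $ 1 $ 1 = 1"
proof -
  have "one_fixing_factor R $ 1 $ 1 = qmult (qconj (column 1 R)) (column 1 R) $ 1"
    by (metis column_def column_qleft_mult one_fixing_factor_def vec_lambda_beta)
  also have "\<dots> = column 1 R \<bullet> column 1 R"
    by (simp add: inner_vec_def sum_4)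
  finally show ?thesis
    using norm_column_SO4[OF assms] by (simp add: norm_eq_1)
qed

lemma qleft_column_mult_one_fixing_factor:
  assumes "R \<in> SO4"
  shows "qleft (column 1 R) ** one_fixing_factor R = R"
  using qleft_qconj_right_inverse[OF norm_column_SO4[OF assms]]
  by (simp add: one_fixing_factor_def matrix_mul_assoc)

lemma continuous_on_one_fixing_factor: "continuous_on S one_fixing_factor"
  unfolding one_fixing_factor_def[abs_def] qleft_def matrix_def matrix_matrix_mult_def
  by (intro continuous_intros)

definition embed_SO3 :: "real^3^3 \<Rightarrow> real^4^4" where
  "embed_SO3 B = vector [
     vector [1, 0, 0, 0],
     vector [0, B$1$1, B$1$2, B$1$3],
     vector [0, B$2$1, B$2$2, B$2$3],
     vector [0, B$3$1, B$3$2, B$3$3]]"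

lemma orthogonal_matrix_embed_SO3: "orthogonal_matrix (embed_SO3 B) \<longleftrightarrow> orthogonal_matrix B"
  by (simp add: orthogonal_matrix_def vec_eq_iff forall_4 forall_3 matrix_matrix_mult_def
      sum_4 sum_3 transpose_def mat_def embed_SO3_def)

lemma det_embed_SO3: "det (embed_SO3 B) = det B"
  by (simp add: det_4 det_3 embed_SO3_def)

lemma SO4_fixing_one_embed_SO3:
  assumes "P \<in> SO4" "P $ 1 $ 1 = 1"
  obtains B where "rotation_matrix B" "P = embed_SO3 B"
proof
  have "norm (row 1 P) = 1" "norm (column 1 P) = 1"
    using assms(1) norm_column_SO4
    by (simp_all add: SO4_def orthogonal_matrix_orthonormal_rows)
  then have "P$1$2 * P$1$2 + P$1$3 * P$1$3 + P$1$4 * P$1$4 = 0"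
    and "P$2$1 * P$2$1 + P$3$1 * P$3$1 + P$4$1 * P$4$1 = 0"
    using assms(2) by (simp_all add: norm_eq_1 inner_vec_def sum_4 row_def column_def)
  then have border: "P$1$2 = 0" "P$1$3 = 0" "P$1$4 = 0" "P$2$1 = 0" "P$3$1 = 0" "P$4$1 = 0"
    by (smt (verit) zero_le_square mult_eq_0_iff)+
  define B :: "real^3^3" where
    "B = vector [vector [P$2$2, P$2$3, P$2$4],
                 vector [P$3$2, P$3$3, P$3$4],
                 vector [P$4$2, P$4$3, P$4$4]]"
  show P: "P = embed_SO3 B"
    by (simp add: vec_eq_iff forall_4 embed_SO3_def B_def border assms(2))
  show "rotation_matrix B"
    using assms(1) unfolding P
    by (simp add: SO4_def rotation_matrix_def orthogonal_matrix_embed_SO3 det_embed_SO3)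
qed

lemma rotation_matrix_column_cross:
  assumes "rotation_matrix (B::real^3^3)"
  shows "cross3 (column 1 B) (column 2 B) = column 3 B"
    and "cross3 (column 2 B) (column 3 B) = column 1 B"
    and "cross3 (column 3 B) (column 1 B) = column 2 B"
  using cross_rotation_matrix[OF assms] cross_basis by (metis matrix_vector_mult_basis)+

text \<open>If \<open>P\<close> fixes \<open>1\<close> and acts as \<open>p \<mapsto> q p q\<^sup>*\<close> with \<open>q\<close> a unit, then this is \<open>4 q q\<^sup>T\<close>.\<close>

definition shepperd_matrix :: "real^4^4 \<Rightarrow> real^4^4" where
  "shepperd_matrix P = vector [
     vector [1 + P$2$2 + P$3$3 + P$4$4, P$4$3 - P$3$4, P$2$4 - P$4$2, P$3$2 - P$2$3],
     vector [P$4$3 - P$3$4, 1 + P$2$2 - P$3$3 - P$4$4, P$2$3 + P$3$2, P$2$4 + P$4$2],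
     vector [P$2$4 - P$4$2, P$2$3 + P$3$2, 1 - P$2$2 + P$3$3 - P$4$4, P$3$4 + P$4$3],
     vector [P$3$2 - P$2$3, P$2$4 + P$4$2, P$3$4 + P$4$3, 1 - P$2$2 - P$3$3 + P$4$4]]"

lemma trace_shepperd_matrix: "trace (shepperd_matrix P) = 4"
  by (simp add: trace_def sum_4 shepperd_matrix_def)

lemma shepperd_matrix_diag_ge_1: "\<exists>k. 1 \<le> shepperd_matrix P $ k $ k"
proof (rule ccontr)
  assume "\<not> ?thesis"
  then have "trace (shepperd_matrix P) < (\<Sum>k\<in>(UNIV::4 set). 1)"
    unfolding trace_def by (intro sum_strict_mono) (auto simp: not_le)
  then show False
    by (simp add: trace_shepperd_matrix)
qed

lemma shepperd_column_of_rotation: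
  assumes "rotation_matrix B"
  defines "K \<equiv> shepperd_matrix (embed_SO3 B)"
  shows "column k K \<bullet> column k K = 4 * K $ k $ k"
    and "R_QQ (column k K, qconj (column k K)) = (4 * K $ k $ k) *\<^sub>R embed_SO3 B"
proof -
  have "transpose B ** B = mat 1"
    using assms(1) by (simp add: rotation_matrix_def orthogonal_matrix_def)
  \<comment> \<open>The cross-product identities among the columns are what \<open>det B = 1\<close> adds to orthogonality.\<close>
  note relations =
    this[unfolded vec_eq_iff forall_3 matrix_matrix_mult_def sum_3 transpose_def mat_def, simplified]
    rotation_matrix_column_cross[OF assms(1), unfolded vec_eq_iff forall_3 cross3_def column_def, simplified]
  have "\<forall>k. column k K \<bullet> column k K = 4 * K $ k $ k"
    using relations unfolding K_def
    by (simp (no_asm) add: forall_4 shepperd_matrix_def embed_SO3_def column_def inner_vec_def sum_4)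
      (intro conjI; algebra)
  then show "column k K \<bullet> column k K = 4 * K $ k $ k" ..
  have "\<forall>k. R_QQ (column k K, qconj (column k K)) = (4 * K $ k $ k) *\<^sub>R embed_SO3 B"
    using relations unfolding K_def
    by (simp (no_asm) add: forall_4 vec_eq_iff shepperd_matrix_def embed_SO3_def column_def
        R_QQ_def matrix_def)
      (intro conjI; algebra)
  then show "R_QQ (column k K, qconj (column k K)) = (4 * K $ k $ k) *\<^sub>R embed_SO3 B" ..
qed

lemma continuous_on_shepperd_matrix [continuous_intros]:
  "continuous_on S f \<Longrightarrow> continuous_on S (\<lambda>x. shepperd_matrix (f x))"
  unfolding shepperd_matrix_def by (intro continuous_intros)

definition raise_coord :: "'n \<Rightarrow> real^'n \<Rightarrow> real^'n" where
  "raise_coord k v = v + max 0 (1 - v $ k) *\<^sub>R axis k 1"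

lemma raise_coord_nth_self: "raise_coord k v $ k = max 1 (v $ k)"
  by (simp add: raise_coord_def)

lemma raise_coord_nonzero: "raise_coord k v \<noteq> 0"
  by (metis raise_coord_nth_self max.cobounded1 zero_index not_one_le_zero)

lemma raise_coord_eq_self: "1 \<le> v $ k \<Longrightarrow> raise_coord k v = v"
  by (simp add: raise_coord_def)

lemma continuous_on_raise_coord [continuous_intros]:
  "continuous_on S f \<Longrightarrow> continuous_on S (\<lambda>x. raise_coord k (f x))"
  unfolding raise_coord_def by (intro continuous_intros)

definition SO4_lift :: "4 \<Rightarrow> real^4^4 \<Rightarrow> (real^4) \<times> (real^4)" where
  "SO4_lift k R =
     (let q = sgn (raise_coord k (column k (shepperd_matrix (one_fixing_factor R))))
      in (qmult (column 1 R) q, qconj q))"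

lemma continuous_on_SO4_lift: "continuous_on S (SO4_lift k)"
  unfolding SO4_lift_def[abs_def] Let_def
  by (intro continuous_intros continuous_on_one_fixing_factor) (simp_all add: raise_coord_nonzero)

lemma SO4_lift_in_S3:
  assumes "R \<in> SO4"
  shows "SO4_lift k R \<in> S3 \<times> S3"
  using norm_column_SO4[OF assms, of 1] raise_coord_nonzero
  by (simp add: SO4_lift_def Let_def S3_def norm_qmult norm_qconj norm_sgn)

lemma R_QQ_SO4_lift:
  assumes R: "R \<in> SO4" and diag: "1 \<le> shepperd_matrix (one_fixing_factor R) $ k $ k"
  shows "R_QQ (SO4_lift k R) = R"
proof -
  define P where "P = one_fixing_factor R"
  obtain B where B: "rotation_matrix B" "P = embed_SO3 B"
    using SO4_fixing_one_embed_SO3 one_fixing_factor_SO4[OF R] one_fixing_factor_fixes_one[OF R]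
    unfolding P_def by blast
  define v where "v = column k (shepperd_matrix P)"
  have vk: "1 \<le> v $ k"
    using diag by (simp add: v_def P_def column_def)
  have inner: "norm v ^ 2 = 4 * v $ k" and conj: "R_QQ (v, qconj v) = (4 * v $ k) *\<^sub>R P"
    using shepperd_column_of_rotation[OF B(1), of k] unfolding B(2) v_def
    by (simp_all add: power2_norm_eq_inner column_def)
  have "R_QQ (sgn v, qconj (sgn v)) = (inverse (norm v) ^ 2 * (4 * v $ k)) *\<^sub>R P"
    by (simp add: sgn_div_norm divide_inverse_commute qconj_scaleR R_QQ_scaleR conj power2_eq_square)
  also have "\<dots> = P"
    using inner vk by (simp add: power_inverse)
  finally have "R_QQ (sgn v, qconj (sgn v)) = P" .
  moreover have "SO4_lift k R = (qmult (column 1 R) (sgn v), qconj (sgn v))"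
    using vk by (simp add: SO4_lift_def Let_def raise_coord_eq_self v_def P_def)
  ultimately show ?thesis
    using qleft_column_mult_one_fixing_factor[OF R] by (simp add: R_QQ_qmult_left P_def)
qed

theorem theorem14:
  shows "\<exists>g1 g2 g3 g4 :: real^4^4 \<Rightarrow> (real^4) \<times> (real^4).
     (\<forall>g \<in> {g1, g2, g3, g4}. continuous_on SO4 g \<and> g ` SO4 \<subseteq> S3 \<times> S3) \<and>
     (\<forall>R \<in> SO4. \<exists>g \<in> {g1, g2, g3, g4}. R_QQ (g R) = R)"
proof (rule exI[of _ "SO4_lift 1"], rule exI[of _ "SO4_lift 2"], rule exI[of _ "SO4_lift 3"],
    rule exI[of _ "SO4_lift 4"], rule conjI)
  show "\<forall>g \<in> {SO4_lift 1, SO4_lift 2, SO4_lift 3, SO4_lift 4}.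
      continuous_on SO4 g \<and> g ` SO4 \<subseteq> S3 \<times> S3"
    using continuous_on_SO4_lift SO4_lift_in_S3 by blast
  show "\<forall>R \<in> SO4. \<exists>g \<in> {SO4_lift 1, SO4_lift 2, SO4_lift 3, SO4_lift 4}. R_QQ (g R) = R"
  proof
    fix R assume R: "R \<in> SO4"
    obtain k where "1 \<le> shepperd_matrix (one_fixing_factor R) $ k $ k"
      using shepperd_matrix_diag_ge_1 by blast
    then have "R_QQ (SO4_lift k R) = R"
      by (rule R_QQ_SO4_lift[OF R])
    moreover have "SO4_lift k \<in> {SO4_lift 1, SO4_lift 2, SO4_lift 3, SO4_lift 4}"
      using exhaust_4[of k] by auto
    ultimately show "\<exists>g \<in> {SO4_lift 1, SO4_lift 2, SO4_lift 3, SO4_lift 4}. R_QQ (g R) = R"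
      by blast
  qed
qed

end
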